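(* Let $G=(V,E)$ be a finite simple connected graph with $n\ge2$ nodes and $0\le t<\kappa(G)$. For every node $v\in V$ there exists a failure pattern $\varphi\in\Phi^\star_v$ such that no node $u\neq v$ crashes at round $1$ in $\varphi$ and $\mathrm{ecc}(v,\varphi)\ge\mathrm{radius}(G,t)$.
   Context: $\kappa(G)$ is the vertex connectivity of $G$; $N(v)$ is the neighbourhood of $v$. Synchronous rounds; in each round every node sends a message to every neighbour. Failure patterns. A failure pattern is a set $\varphi=\{(v,F_v,f_v): v\in F\}$ with $F\subseteq V$, $|F|\le t$, integers $f_v\ge1$ and nonempty $F_v\subseteq N(v)$: $v$ acts normally in rounds $<f_v$, in round $f_v$ (the round at which $v$ crashes) its messages reach exactly $N(v)\setminus F_v$, and afterwards it sends nothing. Nodes in $F$ are faulty, the others correct. $\Phi^{(t)}_{\mathrm{all}}$ is the set of all failure patterns with at most $t$ faulty nodes. Causal paths, eccentricity, radius. A causal path w.r.t. $\varphi$ from $v$ to $v'$ is $u_1=v,\dots,u_q=v'$ with $u_{i+1}\in N(u_i)$, $u_i$ not crashed during rounds $1,\dots,i-1$, and $u_{i+1}\notin F_{u_i}$ if $u_i$ crashes at round $i$; its length is $q-1$. $\mathrm{ecc}(v,\varphi)$ is the maximum over correct nodes $v'$ of the minimum length of a causal path w.r.t. $\varphi$ from $v$ to $v'$ ($\infty$ if some correct node has none). $\Phi^\star_v=\{\varphi\in\Phi^{(t)}_{\mathrm{all}}:\mathrm{ecc}(v,\varphi)<\infty\}$ and $\mathrm{radius}(G,t)=\min_{v\in V}\max_{\varphi\in\Phi^\star_v}\mathrm{ecc}(v,\varphi)$.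 *)

theory Defs
  imports Main "HOL-Library.Extended_Nat"
begin

definition simple_graph :: "'a set \<Rightarrow> ('a \<Rightarrow> 'a \<Rightarrow> bool) \<Rightarrow> bool" where
  "simple_graph V E \<longleftrightarrow> finite V \<and> (\<forall>u w. E u w \<longrightarrow> u \<in> V \<and> w \<in> V)
     \<and> (\<forall>u w. E u w \<longrightarrow> E w u) \<and> (\<forall>u. \<not> E u u)"

definition connected_set :: "'a set \<Rightarrow> ('a \<Rightarrow> 'a \<Rightarrow> bool) \<Rightarrow> bool" where
  "connected_set S E \<longleftrightarrow>
     (\<forall>u\<in>S. \<forall>w\<in>S. (\<lambda>x y. E x y \<and> x \<in> S \<and> y \<in> S)\<^sup>*\<^sup>* u w)"

definition vertex_connectivity :: "'a set \<Rightarrow> ('a \<Rightarrow> 'a \<Rightarrow> bool) \<Rightarrow> nat" where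
  "vertex_connectivity V E = Min {card S | S. S \<subseteq> V \<and>
      (card (V - S) \<le> 1 \<or> \<not> connected_set (V - S) E)}"

definition nbhd :: "('a \<Rightarrow> 'a \<Rightarrow> bool) \<Rightarrow> 'a \<Rightarrow> 'a set" where
  "nbhd E v = {u. E v u}"

text \<open>A failure pattern is a partial map: \<open>\<phi> v = Some (F_v, f_v)\<close> for faulty v
  (dom \<phi> = F), None for correct nodes.\<close>
type_synonym 'a failure_pattern = "'a \<Rightarrow> ('a set \<times> nat) option"

definition is_failure_pattern ::
  "'a set \<Rightarrow> ('a \<Rightarrow> 'a \<Rightarrow> bool) \<Rightarrow> nat \<Rightarrow> 'a failure_pattern \<Rightarrow> bool" where
  "is_failure_pattern V E t \<phi> \<longleftrightarrow> dom \<phi> \<subseteq> V \<and> card (dom \<phi>) \<le> t \<and>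
     (\<forall>v F f. \<phi> v = Some (F, f) \<longrightarrow> 1 \<le> f \<and> F \<noteq> {} \<and> F \<subseteq> nbhd E v)"

definition Phi_all :: "'a set \<Rightarrow> ('a \<Rightarrow> 'a \<Rightarrow> bool) \<Rightarrow> nat \<Rightarrow> 'a failure_pattern set" where
  "Phi_all V E t = {\<phi>. is_failure_pattern V E t \<phi>}"

definition alive_through :: "'a failure_pattern \<Rightarrow> 'a \<Rightarrow> nat \<Rightarrow> bool" where
  "alive_through \<phi> u i = (case \<phi> u of None \<Rightarrow> True | Some (F, f) \<Rightarrow> i < f)"

text \<open>Causal path \<open>xs = [u_1,...,u_q]\<close> (0-based index i corresponds to \<open>u_{i+1}\<close>,
  which sends in round i+1).\<close>
definition causal_path :: "('a \<Rightarrow> 'a \<Rightarrow> bool) \<Rightarrow> 'a failure_pattern \<Rightarrow> 'a list \<Rightarrow> bool" where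
  "causal_path E \<phi> xs \<longleftrightarrow> xs \<noteq> [] \<and>
     (\<forall>i < length xs. alive_through \<phi> (xs ! i) i) \<and>
     (\<forall>i. Suc i < length xs \<longrightarrow> E (xs ! i) (xs ! Suc i) \<and>
        (\<forall>F f. \<phi> (xs ! i) = Some (F, f) \<and> f = Suc i \<longrightarrow> xs ! Suc i \<notin> F))"

definition causal_dist ::
  "('a \<Rightarrow> 'a \<Rightarrow> bool) \<Rightarrow> 'a failure_pattern \<Rightarrow> 'a \<Rightarrow> 'a \<Rightarrow> enat" where
  "causal_dist E \<phi> v w = (INF xs \<in> {xs. causal_path E \<phi> xs \<and> hd xs = v \<and> last xs = w}.
      enat (length xs - 1))"

definition ecc ::
  "'a set \<Rightarrow> ('a \<Rightarrow> 'a \<Rightarrow> bool) \<Rightarrow> 'a \<Rightarrow> 'a failure_pattern \<Rightarrow> enat" where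
  "ecc V E v \<phi> = (SUP w \<in> V - dom \<phi>. causal_dist E \<phi> v w)"

definition Phi_star ::
  "'a set \<Rightarrow> ('a \<Rightarrow> 'a \<Rightarrow> bool) \<Rightarrow> nat \<Rightarrow> 'a \<Rightarrow> 'a failure_pattern set" where
  "Phi_star V E t v = {\<phi> \<in> Phi_all V E t. ecc V E v \<phi> < \<infinity>}"

definition radius :: "'a set \<Rightarrow> ('a \<Rightarrow> 'a \<Rightarrow> bool) \<Rightarrow> nat \<Rightarrow> enat" where
  "radius V E t = (INF v \<in> V. SUP \<phi> \<in> Phi_star V E t v. ecc V E v \<phi>)"

end

theory Submission
  imports Defs
begin

text \<open>A shortest causal path never repeats a node, so every finite causal distance, and hence
  every finite eccentricity, is at most \<open>|V|\<close>. The finitely many values the eccentricity of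
  v takes on \<open>\<Phi>\<^sup>\<star>\<^sub>v\<close> (nonempty, as it contains the fault-free pattern) therefore have a maximum,
  attained by some \<open>\<phi>\<close>, and the radius is at most that maximum. In \<open>\<phi>\<close>, replace every
  round-1 crash of a node \<open>u \<noteq> v\<close> by a crash in round 2 that reaches no neighbour. A round-1
  crasher can only start a causal path, so it lies on no causal path from v; a silent round-2
  crasher can only be the second node of such a path, and then the last one, which is not
  correct. Hence causal paths from v to correct nodes, and with them the eccentricity of v,
  are unchanged.\<close>

section \<open>Causal paths\<close>

lemma alive_through_mono: "alive_through \<phi> u m \<Longrightarrow> k \<le> m \<Longrightarrow> alive_through \<phi> u k"
  by (auto simp: alive_through_def split: option.splits)

lemma causal_path_cong:
  assumes "\<forall>x\<in>set xs. \<phi> x = \<psi> x"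
  shows "causal_path E \<phi> xs = causal_path E \<psi> xs"
proof -
  have "\<forall>i<length xs. \<phi> (xs!i) = \<psi> (xs!i)" using assms by auto
  then show ?thesis unfolding causal_path_def alive_through_def by auto
qed

lemma causal_path_no_failures_of_rtranclp:
  assumes "E\<^sup>*\<^sup>* u w"
  shows "\<exists>xs. causal_path E Map.empty xs \<and> hd xs = u \<and> last xs = w"
  using assms
proof (induction rule: converse_rtranclp_induct)
  case base
  show ?case by (rule exI[of _ "[w]"]) (simp add: causal_path_def alive_through_def)
next
  case (step x y)
  then obtain ys where ys: "causal_path E Map.empty ys" "hd ys = y" "last ys = w" by auto
  have ne: "ys \<noteq> []" using ys by (simp add: causal_path_def)
  have "E x (ys ! 0)" using step.hyps(1) ys ne by (simp add: hd_conv_nth)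
  then have "\<forall>i. Suc i < length (x # ys) \<longrightarrow> E ((x # ys) ! i) ((x # ys) ! Suc i)"
    using ys by (auto simp: causal_path_def nth_Cons split: nat.splits)
  then have "causal_path E Map.empty (x # ys)"
    unfolding causal_path_def alive_through_def by auto
  then show ?case using ys ne by (intro exI[of _ "x # ys"]) auto
qed

lemma causal_path_shortcut:
  assumes cp: "causal_path E \<phi> xs" and ij: "i < j" "j < length xs" "xs!i = xs!j"
  shows "causal_path E \<phi> (take i xs @ drop j xs)"
proof -
  define ys where "ys = take i xs @ drop j xs"
  define d where "d = j - i"
  have len: "length ys = i + (length xs - j)" using ij by (simp add: ys_def)
  have nth: "ys ! k = (if k < i then xs!k else xs!(k+d))" if "k < length ys" for k
    using that ij by (auto simp: ys_def nth_append d_def min_def add.commute)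
  have al: "\<forall>k<length xs. alive_through \<phi> (xs ! k) k"
   and ed: "\<And>k. Suc k < length xs \<Longrightarrow> E (xs ! k) (xs ! Suc k) \<and>
        (\<forall>F f. \<phi> (xs ! k) = Some (F, f) \<and> f = Suc k \<longrightarrow> xs ! Suc k \<notin> F)"
    using cp by (auto simp: causal_path_def)
  have "\<forall>k<length ys. alive_through \<phi> (ys ! k) k"
  proof (intro allI impI)
    fix k assume k: "k < length ys"
    show "alive_through \<phi> (ys ! k) k"
    proof (cases "k < i")
      case True then show ?thesis using nth[OF k] al k len ij by auto
    next
      case False
      have "k + d < length xs" using k len False ij by (simp add: d_def)
      then show ?thesis using nth[OF k] al False alive_through_mono[of \<phi> "xs!(k+d)" "k+d" k] by auto
    qed
  qed
  moreover have "E (ys ! k) (ys ! Suc k) \<and>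
        (\<forall>F f. \<phi> (ys ! k) = Some (F, f) \<and> f = Suc k \<longrightarrow> ys ! Suc k \<notin> F)"
    if k: "Suc k < length ys" for k
  proof -
    have k': "k < length ys" using k by simp
    consider "Suc k < i" | "Suc k = i" | "i \<le> k" by linarith
    then show ?thesis
    proof cases
      case 1
      then show ?thesis using nth[OF k] nth[OF k'] ed[of k] ij by auto
    next
      case 2
      have "ys ! Suc k = xs ! Suc k" using nth[OF k] 2 ij by (simp add: d_def)
      then show ?thesis using nth[OF k'] 2 ed[of k] ij by auto
    next
      case 3
      have lt: "Suc (k + d) < length xs" using k len 3 ij by (simp add: d_def)
      have ys_k: "ys ! k = xs ! (k+d)" "ys ! Suc k = xs ! Suc (k+d)"
        using nth[OF k] nth[OF k'] 3 by auto
      \<comment> \<open>\<open>ys ! k\<close> crashes no earlier than round \<open>k + d + 1 > k + 1\<close>\<close>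
      have "alive_through \<phi> (ys ! k) (k+d)" using al lt ys_k by auto
      then have "\<forall>F f. \<phi> (ys ! k) = Some (F, f) \<longrightarrow> f \<noteq> Suc k"
        using ij by (auto simp: alive_through_def d_def)
      then show ?thesis using ys_k ed[OF lt] by auto
    qed
  qed
  moreover have "ys \<noteq> []" using len ij by auto
  ultimately show ?thesis unfolding ys_def[symmetric] causal_path_def by blast
qed

lemma causal_path_subset_vertices:
  assumes g: "simple_graph V E" and cp: "causal_path E \<phi> xs" and hd: "hd xs \<in> V"
  shows "set xs \<subseteq> V"
proof
  fix x assume "x \<in> set xs"
  then obtain k where k: "k < length xs" "x = xs ! k" by (auto simp: in_set_conv_nth)
  have ed: "\<And>k. Suc k < length xs \<Longrightarrow> E (xs ! k) (xs ! Suc k)"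
    using cp by (auto simp: causal_path_def)
  have EV: "\<And>u w. E u w \<Longrightarrow> u \<in> V \<and> w \<in> V" using g by (auto simp: simple_graph_def)
  show "x \<in> V"
  proof (cases k)
    case 0 then show ?thesis using hd k cp by (auto simp: causal_path_def hd_conv_nth)
  next
    case (Suc m) then show ?thesis using ed[of m] EV k by auto
  qed
qed

lemma causal_path_shorten_le_card:
  assumes g: "simple_graph V E"
  shows "causal_path E \<phi> xs \<Longrightarrow> hd xs \<in> V \<Longrightarrow>
     \<exists>ys. causal_path E \<phi> ys \<and> hd ys = hd xs \<and> last ys = last xs \<and> length ys \<le> card V"
proof (induction "length xs" arbitrary: xs rule: less_induct)
  case less
  show ?case
  proof (cases "distinct xs")
    case True
    have "finite V" using g by (simp add: simple_graph_def)
    then have "card (set xs) \<le> card V"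
      using causal_path_subset_vertices[OF g less.prems] by (rule card_mono)
    then show ?thesis using True less.prems by (auto simp: distinct_card)
  next
    case False
    then obtain i j where ij: "i < j" "j < length xs" "xs!i = xs!j"
      by (metis distinct_conv_nth linorder_neqE_nat)
    define ys where "ys = take i xs @ drop j xs"
    have cy: "causal_path E \<phi> ys" using causal_path_shortcut[OF less.prems(1) ij] ys_def by simp
    have hd: "hd ys = hd xs"
    proof (cases "i = 0")
      case True then show ?thesis using ij by (cases xs) (auto simp: ys_def hd_drop_conv_nth)
    next
      case False then show ?thesis using ij by (simp add: ys_def hd_append)
    qed
    have "last ys = last xs" "length ys < length xs" using ij by (simp_all add: ys_def)
    then show ?thesis using less.hyps[of ys] cy hd less.prems(2) by fastforce
  qed
qed

section \<open>Bounds on causal distance and eccentricity\<close>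

lemma causal_dist_le_length:
  "causal_path E \<phi> xs \<Longrightarrow> hd xs = v \<Longrightarrow> last xs = w \<Longrightarrow>
   causal_dist E \<phi> v w \<le> enat (length xs - 1)"
  unfolding causal_dist_def by (rule INF_lower) auto

lemma causal_dist_le_card:
  assumes g: "simple_graph V E" and v: "v \<in> V" and fin: "causal_dist E \<phi> v w < \<infinity>"
  shows "causal_dist E \<phi> v w \<le> enat (card V)"
proof -
  have "{xs. causal_path E \<phi> xs \<and> hd xs = v \<and> last xs = w} \<noteq> {}"
  proof
    assume none: "{xs. causal_path E \<phi> xs \<and> hd xs = v \<and> last xs = w} = {}"
    have "causal_dist E \<phi> v w = \<infinity>" unfolding causal_dist_def none by (simp add: top_enat_def)
    with fin show False by simp
  qed
  then obtain xs where xs: "causal_path E \<phi> xs" "hd xs = v" "last xs = w" by auto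
  obtain ys where ys: "causal_path E \<phi> ys" "hd ys = v" "last ys = w" "length ys \<le> card V"
    using causal_path_shorten_le_card[OF g xs(1)] xs v by auto
  have "causal_dist E \<phi> v w \<le> enat (length ys - 1)" using causal_dist_le_length[OF ys(1-3)] .
  also have "\<dots> \<le> enat (card V)" using ys(4) by simp
  finally show ?thesis .
qed

lemma ecc_le_card:
  assumes g: "simple_graph V E" and v: "v \<in> V" and fin: "ecc V E v \<phi> < \<infinity>"
  shows "ecc V E v \<phi> \<le> enat (card V)"
  unfolding ecc_def
proof (rule SUP_least)
  fix w assume "w \<in> V - dom \<phi>"
  then have "causal_dist E \<phi> v w \<le> ecc V E v \<phi>" unfolding ecc_def by (rule SUP_upper)
  then have "causal_dist E \<phi> v w < \<infinity>" using fin by (rule le_less_trans)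
  then show "causal_dist E \<phi> v w \<le> enat (card V)" using causal_dist_le_card[OF g v] by blast
qed

lemma no_failures_in_Phi_star:
  assumes g: "simple_graph V E" and c: "connected_set V E" and v: "v \<in> V"
  shows "Map.empty \<in> Phi_star V E t v"
proof -
  have "ecc V E v Map.empty \<le> enat (card V)"
    unfolding ecc_def
  proof (rule SUP_least)
    fix w assume "w \<in> V - dom (Map.empty :: 'a failure_pattern)"
    then have "(\<lambda>x y. E x y \<and> x \<in> V \<and> y \<in> V)\<^sup>*\<^sup>* v w" using c v by (simp add: connected_set_def)
    then have "E\<^sup>*\<^sup>* v w" by (rule rtranclp_mono[THEN predicate2D, rotated]) auto
    then obtain xs where "causal_path E Map.empty xs" "hd xs = v" "last xs = w"
      using causal_path_no_failures_of_rtranclp by metis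
    then have "causal_dist E Map.empty v w < \<infinity>"
      using causal_dist_le_length by (metis enat_ord_code(4) le_less_trans)
    then show "causal_dist E Map.empty v w \<le> enat (card V)" using causal_dist_le_card[OF g v] by blast
  qed
  then have "ecc V E v Map.empty < \<infinity>" by (rule le_less_trans) simp
  then show ?thesis by (auto simp: Phi_star_def Phi_all_def is_failure_pattern_def)
qed

lemma ecc_maximizer_exists:
  assumes g: "simple_graph V E" and c: "connected_set V E" and v: "v \<in> V"
  shows "\<exists>\<phi>\<in>Phi_star V E t v. (SUP \<psi>\<in>Phi_star V E t v. ecc V E v \<psi>) = ecc V E v \<phi>"
proof -
  define A where "A = ecc V E v ` Phi_star V E t v"
  have "A \<noteq> {}" using no_failures_in_Phi_star[OF g c v] by (auto simp: A_def)
  moreover have "y \<le> enat (card V)" if "y \<in> A" for y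
    using that ecc_le_card[OF g v] by (auto simp: A_def Phi_star_def)
  then have "finite A" using finite_enat_bounded by blast
  ultimately have "Sup A \<in> A" by (simp add: Sup_enat_def)
  then show ?thesis by (auto simp: A_def)
qed

section \<open>Postponing first-round crashes\<close>

definition delay_first_round_crashes ::
  "'a \<Rightarrow> ('a \<Rightarrow> 'a \<Rightarrow> bool) \<Rightarrow> 'a failure_pattern \<Rightarrow> 'a failure_pattern" where
  "delay_first_round_crashes v E \<phi> u =
     (if u \<noteq> v \<and> (\<exists>F. \<phi> u = Some (F, 1)) then Some (nbhd E u, 2) else \<phi> u)"

lemma dom_delay_first_round_crashes [simp]: "dom (delay_first_round_crashes v E \<phi>) = dom \<phi>"
  unfolding dom_def delay_first_round_crashes_def by auto

lemma delay_first_round_crashes_not_first_round: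
  "u \<noteq> v \<Longrightarrow> delay_first_round_crashes v E \<phi> u = Some (F, f) \<Longrightarrow> f \<noteq> 1"
  by (auto simp: delay_first_round_crashes_def split: if_splits)

lemma is_failure_pattern_delay_first_round_crashes:
  assumes pf: "is_failure_pattern V E t \<phi>" and nb: "\<And>u. u \<in> V \<Longrightarrow> \<exists>w. E u w"
  shows "is_failure_pattern V E t (delay_first_round_crashes v E \<phi>)"
proof -
  have "1 \<le> f \<and> F \<noteq> {} \<and> F \<subseteq> nbhd E u"
    if u: "delay_first_round_crashes v E \<phi> u = Some (F, f)" for u F f
  proof (cases "u \<noteq> v \<and> (\<exists>F. \<phi> u = Some (F, 1))")
    case True
    then have "u \<in> V" using pf by (auto simp: is_failure_pattern_def)
    then show ?thesis using nb True u by (auto simp: delay_first_round_crashes_def nbhd_def)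
  next
    case False
    then have "\<phi> u = Some (F, f)" using u by (auto simp: delay_first_round_crashes_def)
    then show ?thesis using pf by (auto simp: is_failure_pattern_def)
  qed
  then show ?thesis using pf by (simp add: is_failure_pattern_def)
qed

lemma first_round_crash_on_causal_path:
  assumes cp: "causal_path E \<phi> xs" and x: "x \<in> set xs" and crash: "\<phi> x = Some (F, 1)"
  shows "x = hd xs"
proof -
  obtain k where k: "k < length xs" "x = xs ! k" using x by (auto simp: in_set_conv_nth)
  then have "alive_through \<phi> x k" using cp by (auto simp: causal_path_def)
  then have "k = 0" using crash by (simp add: alive_through_def)
  then show ?thesis using k by (simp add: hd_conv_nth)
qed

lemma silent_second_round_crash_on_causal_path:
  assumes cp: "causal_path E \<phi> xs" and x: "x \<in> set xs" and crash: "\<phi> x = Some (nbhd E x, 2)"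
  shows "x = hd xs \<or> x = last xs"
proof -
  obtain k where k: "k < length xs" "x = xs ! k" using x by (auto simp: in_set_conv_nth)
  then have "alive_through \<phi> x k" using cp by (auto simp: causal_path_def)
  then have "k < 2" using crash by (simp add: alive_through_def)
  moreover have "\<not> Suc 1 < length xs" if "k = 1"
  proof
    assume "Suc 1 < length xs"
    then have "E (xs!1) (xs!Suc 1)" "xs!Suc 1 \<notin> nbhd E (xs!1)"
      using cp crash k that unfolding causal_path_def by auto
    then show False by (simp add: nbhd_def)
  qed
  ultimately consider "k = 0" | "k = length xs - 1" using k by linarith
  moreover have "xs \<noteq> []" using k by auto
  ultimately show ?thesis using k by cases (auto simp: hd_conv_nth last_conv_nth)
qed

lemma causal_path_delay_first_round_crashes_iff:
  assumes hd: "hd xs = v" and last: "last xs \<notin> dom \<phi>"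
  shows "causal_path E (delay_first_round_crashes v E \<phi>) xs \<longleftrightarrow> causal_path E \<phi> xs"
    (is "causal_path E ?\<psi> xs \<longleftrightarrow> _")
proof
  assume cp: "causal_path E ?\<psi> xs"
  have "?\<psi> x = \<phi> x" if "x \<in> set xs" for x
    using silent_second_round_crash_on_causal_path[OF cp that] hd last
    by (auto simp: delay_first_round_crashes_def)
  then show "causal_path E \<phi> xs" using cp causal_path_cong by metis
next
  assume cp: "causal_path E \<phi> xs"
  have "?\<psi> x = \<phi> x" if "x \<in> set xs" for x
    using first_round_crash_on_causal_path[OF cp that] hd
    by (auto simp: delay_first_round_crashes_def)
  then show "causal_path E ?\<psi> xs" using cp causal_path_cong by metis
qed

lemma ecc_delay_first_round_crashes:
  "ecc V E v (delay_first_round_crashes v E \<phi>) = ecc V E v \<phi>"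
proof -
  have "causal_dist E (delay_first_round_crashes v E \<phi>) v w = causal_dist E \<phi> v w"
    if "w \<notin> dom \<phi>" for w
    unfolding causal_dist_def
    using causal_path_delay_first_round_crashes_iff[of _ v \<phi> E] that by metis
  then show ?thesis unfolding ecc_def by (intro SUP_cong) auto
qed

lemma connected_set_has_neighbour:
  assumes c: "connected_set V E" and n: "card V \<ge> 2" and u: "u \<in> V"
  shows "\<exists>w. E u w"
proof -
  have "\<not> V \<subseteq> {u}" using n card_mono[of "{u}" V] by fastforce
  then obtain x where x: "x \<in> V" "x \<noteq> u" by blast
  then have "(\<lambda>x y. E x y \<and> x \<in> V \<and> y \<in> V)\<^sup>*\<^sup>* u x" using c u by (simp add: connected_set_def)
  then show ?thesis using x(2) by (cases rule: converse_rtranclpE) auto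
qed

theorem mainTheorem4:
  fixes V :: "'a set" and E :: "'a \<Rightarrow> 'a \<Rightarrow> bool" and t :: nat
  assumes "simple_graph V E"
    and "connected_set V E"
    and "card V \<ge> 2"
    and "t < vertex_connectivity V E"
    and "v \<in> V"
  shows "\<exists>\<phi> \<in> Phi_star V E t v.
           (\<forall>u F f. u \<noteq> v \<longrightarrow> \<phi> u = Some (F, f) \<longrightarrow> f \<noteq> 1) \<and>
           radius V E t \<le> ecc V E v \<phi>"
proof -
  obtain \<phi> where \<phi>: "\<phi> \<in> Phi_star V E t v"
    and max: "(SUP \<psi>\<in>Phi_star V E t v. ecc V E v \<psi>) = ecc V E v \<phi>"
    using ecc_maximizer_exists[OF assms(1,2,5)] by blast
  have "radius V E t \<le> ecc V E v \<phi>"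
    unfolding radius_def max[symmetric] using assms(5) by (rule INF_lower)
  moreover define \<psi> where "\<psi> = delay_first_round_crashes v E \<phi>"
  have "is_failure_pattern V E t \<psi>"
    using \<phi> connected_set_has_neighbour[OF assms(2,3)] is_failure_pattern_delay_first_round_crashes
    by (fastforce simp: \<psi>_def Phi_star_def Phi_all_def)
  then have "\<psi> \<in> Phi_star V E t v"
    using \<phi> by (simp add: Phi_star_def Phi_all_def \<psi>_def ecc_delay_first_round_crashes)
  ultimately show ?thesis
    using delay_first_round_crashes_not_first_round
    by (metis \<psi>_def ecc_delay_first_round_crashes)
qed

end
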